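(* Let $\mathcal X$ be a Banach space, $E\subset\mathcal X$ convex, $\hat\phi_i:\mathcal X\to\mathbb R$ ($i=0,\dots,j$), $\hat\psi:\mathcal X\to\mathbb R^k$ with $k\ge1$. Let $\bar e\in E$ be a minimizer of (OP) with $\hat\phi_0(\bar e)=0$, and assume (C5). Let $y\in T^\flat_E(\bar e)$ satisfy $D\hat\phi_i(\bar e)(y)\le0$ for $i\in\hat I_A$, $D\hat\psi(\bar e)(y)=0$, and $T_E^{\flat(2)}(\bar e,y)\ne\emptyset$. Set $\hat I_0'=\hat I_N\cup\{i\in\hat I_A:D\hat\phi_i(\bar e)(y)<0\}$, $\hat I_0''=\{0,\dots,j\}\setminus\hat I_0'$, $$\mathcal K=\{D\hat\Phi_{\hat I_0''}(\bar e)(x)+\tfrac12D^2\hat\Phi_{\hat I_0''}(\bar e)(y):x\in T_E^{\flat(2)}(\bar e,y)\}\subset\mathbb R^{1+j+k},$$ $$\mathcal K^{\hat\psi}=\{D\hat\psi(\bar e)(x)+\tfrac12D^2\hat\psi(\bar e)(y):x\in T_E^{\flat(2)}(\bar e,y)\}\subset\mathbb R^k.$$ Then $\mathcal K$ and $\mathcal K^{\hat\psi}$ are convex. Moreover, let $Y=(Y_0,\dots,Y_j)^\top$ with $Y_i=D\hat\phi_i(\bar e)(y)$ for $i\in\hat I_A$ and $Y_i=0$ otherwise, and $Z=(-\infty,0)^{j+1}-\{\lambda(\hat\phi(\bar e)+Y):\lambda>0\}$, where $\hat\phi=(\hat\phi_0,\dots,\hat\phi_j)^\top$. If there is no $\ell\in\mathbb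 R^{1+j+k}\setminus\{0\}$ with $$\ell^\top\big(D\hat\Phi_{\hat I_0''}(\bar e)(x)+\tfrac12D^2\hat\Phi_{\hat I_0''}(\bar e)(y)\big)\le\ell^\top(z^\top,0)^\top\quad\forall x\in T_E^{\flat(2)}(\bar e,y),\ \forall z\in Z,$$ then the affine hull $\mathrm{aff}\,\mathcal K^{\hat\psi}$ is a linear subspace of $\mathbb R^k$ of dimension $D(\mathcal K^{\hat\psi})>0$, and there exist $h_1,\dots,h_{D(\mathcal K^{\hat\psi})+1}\in T^{\flat(2)}_E(\bar e,y)$ and $\delta_0>0$ such that $$B_{\mathrm{aff}\,\mathcal K^{\hat\psi}}(\delta_0)\subseteq\mathrm{Int}\,\mathrm{co}\{D\hat\psi(\bar e)(h_l)+\tfrac12D^2\hat\psi(\bar e)(y)\}_{l=1}^{D(\mathcal K^{\hat\psi})+1}$$ and $D\hat\phi_i(\bar e)(h_l)+\frac12D^2\hat\phi_i(\bar e)(y)<0$ for all $l=1,\dots,D(\mathcal K^{\hat\psi})+1$ and all $i\in\hat I_0''$. Here $B_{\mathrm{aff}\,\mathcal K^{\hat\psi}}(\delta_0)$ is the closed ball of radius $\delta_0$ centered at $0$ in that subspace, and Int is the interior relative to that subspace.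
   Context: (OP): minimize $\hat\phi_0(e)$ over $e\in E$ subject to $\hat\phi_i(e)\le0$ ($i=1,\dots,j$) and $\hat\psi(e)=0$. $\hat\Phi=(\hat\phi_0,\dots,\hat\phi_j,\hat\psi_1,\dots,\hat\psi_k)^\top$; for $I\subseteq\{0,\dots,j\}$, $\hat\Phi_I$ is $\hat\Phi$ with the components $\hat\phi_i$, $i\notin I$, replaced by $0$ (same for $D\hat\Phi_I$, $D^2\hat\Phi_I$). $\hat I_A=\{i\in\{1,\dots,j\}:\hat\phi_i(\bar e)=0\}\cup\{0\}$, $\hat I_N=\{i\in\{1,\dots,j\}:\hat\phi_i(\bar e)<0\}$. (C5): $\hat\Phi$ is Fréchet differentiable at $\bar e$ with derivative $D\hat\Phi(\bar e)$ (components $D\hat\phi_i(\bar e)$, $D\hat\psi_l(\bar e)$), and for each $y\in\mathcal X$ there exists a vector $D^2\hat\Phi(\bar e)(y)\in\mathbb R^{1+j+k}$ (components $D^2\hat\phi_i(\bar e)(y)$, $D^2\hat\psi_l(\bar e)(y)$) such that for all $\alpha>0$, $C>0$ there is $\epsilon_0>0$ with $|\hat\Phi(\bar e+\epsilon y+\epsilon^2\eta)-\hat\Phi(\bar e)-\epsilon D\hat\Phi(\bar e)(y)-\epsilon^2D\hat\Phi(\bar e)(\eta)-\frac12\epsilon^2D^2\hat\Phi(\bar e)(y)|\le\alpha\epsilon^2$ for all $\eta$ with $|\eta|\le C$ and $\epsilon\in[0,\epsilon_0]$. Tangent sets: $v\in T_E^\flat(x)$ iff for every $h_n\to0^+$ there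 are $v_n\to v$ with $x+h_nv_n\in E$; for $v\in T_E^\flat(x)$, $w\in T_E^{\flat(2)}(x,v)$ iff for every $h_n\to0^+$ there are $w_n\to w$ with $x+h_nv+h_n^2w_n\in E$. *)

theory Defs
  imports "HOL-Analysis.Analysis"
begin

text \<open>Index set \{0,...,j\} is modelled by a finite type 'm with a distinguished
  element i0 (playing the role of the objective index 0).  Vectors of R^(1+j+k)
  are elements of real^'m \<times> real^'k (Euclidean norm / inner product).\<close>

definition vecPhi :: "('m::finite \<Rightarrow> 'x \<Rightarrow> real) \<Rightarrow> ('x \<Rightarrow> real^'k) \<Rightarrow> 'x \<Rightarrow> (real^'m) \<times> (real^'k)"
  where "vecPhi \<phi> \<psi> e = ((\<chi> i. \<phi> i e), \<psi> e)"

definition vecPhiI :: "'m set \<Rightarrow> ('m::finite \<Rightarrow> 'x \<Rightarrow> real) \<Rightarrow> ('x \<Rightarrow> real^'k) \<Rightarrow> 'x \<Rightarrow> (real^'m) \<times> (real^'k)"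
  where "vecPhiI I \<phi> \<psi> e = ((\<chi> i. if i \<in> I then \<phi> i e else 0), \<psi> e)"

definition feasible_OP :: "'x set \<Rightarrow> 'm \<Rightarrow> ('m \<Rightarrow> 'x \<Rightarrow> real) \<Rightarrow> ('x \<Rightarrow> 'v::zero) \<Rightarrow> 'x \<Rightarrow> bool"
  where "feasible_OP E i0 \<phi> \<psi> e \<longleftrightarrow> e \<in> E \<and> (\<forall>i. i \<noteq> i0 \<longrightarrow> \<phi> i e \<le> 0) \<and> \<psi> e = 0"

definition minimizer_OP :: "'x set \<Rightarrow> 'm \<Rightarrow> ('m \<Rightarrow> 'x \<Rightarrow> real) \<Rightarrow> ('x \<Rightarrow> 'v::zero) \<Rightarrow> 'x \<Rightarrow> bool"
  where "minimizer_OP E i0 \<phi> \<psi> eb \<longleftrightarrow> feasible_OP E i0 \<phi> \<psi> eb \<and>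
           (\<forall>e. feasible_OP E i0 \<phi> \<psi> e \<longrightarrow> \<phi> i0 eb \<le> \<phi> i0 e)"

definition cond_C5 :: "('m::finite \<Rightarrow> 'x::real_normed_vector \<Rightarrow> real) \<Rightarrow> ('x \<Rightarrow> real^'k)
     \<Rightarrow> ('m \<Rightarrow> 'x \<Rightarrow> real) \<Rightarrow> ('x \<Rightarrow> real^'k) \<Rightarrow> ('m \<Rightarrow> 'x \<Rightarrow> real) \<Rightarrow> ('x \<Rightarrow> real^'k) \<Rightarrow> 'x \<Rightarrow> bool"
  where "cond_C5 \<phi> \<psi> D\<phi> D\<psi> D2\<phi> D2\<psi> eb \<longleftrightarrow>
     (vecPhi \<phi> \<psi> has_derivative vecPhi D\<phi> D\<psi>) (at eb) \<and>
     (\<forall>y \<alpha> C. \<alpha> > 0 \<longrightarrow> C > 0 \<longrightarrow> (\<exists>\<epsilon>0>0. \<forall>\<eta> \<epsilon>. norm \<eta> \<le> C \<longrightarrow> 0 \<le> \<epsilon> \<longrightarrow> \<epsilon> \<le> \<epsilon>0 \<longrightarrow>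
        norm (vecPhi \<phi> \<psi> (eb + \<epsilon> *\<^sub>R y + \<epsilon>\<^sup>2 *\<^sub>R \<eta>) - vecPhi \<phi> \<psi> eb
              - \<epsilon> *\<^sub>R vecPhi D\<phi> D\<psi> y - \<epsilon>\<^sup>2 *\<^sub>R vecPhi D\<phi> D\<psi> \<eta>
              - (\<epsilon>\<^sup>2 / 2) *\<^sub>R vecPhi D2\<phi> D2\<psi> y) \<le> \<alpha> * \<epsilon>\<^sup>2))"

definition adj_tangent :: "'x::real_normed_vector set \<Rightarrow> 'x \<Rightarrow> 'x set"
  where "adj_tangent E x = {v. \<forall>h::nat \<Rightarrow> real. (\<forall>n. h n > 0) \<and> h \<longlonglongrightarrow> 0 \<longrightarrow>
            (\<exists>vn. vn \<longlonglongrightarrow> v \<and> (\<forall>n. x + h n *\<^sub>R vn n \<in> E))}"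

definition adj_tangent2 :: "'x::real_normed_vector set \<Rightarrow> 'x \<Rightarrow> 'x \<Rightarrow> 'x set"
  where "adj_tangent2 E x v = {w. \<forall>h::nat \<Rightarrow> real. (\<forall>n. h n > 0) \<and> h \<longlonglongrightarrow> 0 \<longrightarrow>
            (\<exists>wn. wn \<longlonglongrightarrow> w \<and> (\<forall>n. x + h n *\<^sub>R v + (h n)\<^sup>2 *\<^sub>R wn n \<in> E))}"

end

theory Submission
  imports Defs
begin

text \<open>
  The second-order adjacent tangent set \<open>T\<close> is convex, so \<open>K\<close> and \<open>K\<psi>\<close> are affine images
  of a convex set. If no nonzero \<open>\<ell>\<close> separates \<open>K\<close> from \<open>Z \<times> {0}\<close>, these convex sets meet:
  some \<open>x\<^sub>0 \<in> T\<close> has \<open>\<psi>\<close>-part \<open>0\<close> and strictly negative \<open>\<phi>\<close>-parts on \<open>I\<^sub>0''\<close> (every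
  \<open>z \<in> Z\<close> is negative there, since \<open>\<phi>\<^sub>i(e) + Y\<^sub>i = 0\<close> for \<open>i \<in> I\<^sub>0''\<close>). Non-separation with
  \<open>\<ell> = (0, -b)\<close> shows that \<open>K\<psi>\<close> meets every open half-space \<open>{v. b \<bullet> v < 0}\<close>; moving
  from \<open>x\<^sub>0\<close> slightly towards a witness keeps the \<open>I\<^sub>0''\<close>-inequalities strict, so the image of
  the strictly feasible part of \<open>T\<close> is a convex set meeting all these half-spaces, hence a
  neighbourhood of \<open>0\<close>. Thus \<open>aff K\<psi>\<close> is the whole space, and a small simplex around \<open>0\<close>
  inside that image, pulled back to \<open>T\<close>, provides \<open>h\<^sub>1, \<dots>, h\<^sub>k\<^sub>+\<^sub>1\<close>.
\<close>

definition affine_map :: "('a::real_vector \<Rightarrow> 'b::real_vector) \<Rightarrow> bool"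
  where "affine_map f \<longleftrightarrow> (\<forall>x y u. f ((1 - u) *\<^sub>R x + u *\<^sub>R y) = (1 - u) *\<^sub>R f x + u *\<^sub>R f y)"

lemma affine_map_linear_add_const:
  assumes "linear f" shows "affine_map (\<lambda>x. f x + c)"
  unfolding affine_map_def
proof (intro allI)
  fix x y u
  have "f ((1 - u) *\<^sub>R x + u *\<^sub>R y) = (1 - u) *\<^sub>R f x + u *\<^sub>R f y"
    by (simp add: linear_add[OF assms] linear_scale[OF assms])
  then show "f ((1 - u) *\<^sub>R x + u *\<^sub>R y) + c = (1 - u) *\<^sub>R (f x + c) + u *\<^sub>R (f y + c)"
    by (simp add: algebra_simps)
qed

lemma convex_image_affine_map:
  assumes "convex S" "affine_map f" shows "convex (f ` S)"
proof (rule convexI)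
  fix a b and u v :: real
  assume "a \<in> f ` S" "b \<in> f ` S" "0 \<le> u" "0 \<le> v" "u + v = 1"
  then obtain x y where "x \<in> S" "y \<in> S" "a = f x" "b = f y" "u = 1 - v" by auto
  with assms show "u *\<^sub>R a + v *\<^sub>R b \<in> f ` S"
    unfolding affine_map_def by (metis \<open>0 \<le> u\<close> \<open>0 \<le> v\<close> \<open>u + v = 1\<close> convexD image_eqI)
qed

lemma convex_strict_sublevels_affine:
  fixes g :: "'i \<Rightarrow> 'x::real_vector \<Rightarrow> real"
  assumes "convex T" "\<And>i. affine_map (g i)"
  shows "convex {x \<in> T. \<forall>i\<in>I. g i x < 0}"
proof (rule convexI)
  fix x y and u v :: real
  assume x: "x \<in> {x \<in> T. \<forall>i\<in>I. g i x < 0}" and y: "y \<in> {x \<in> T. \<forall>i\<in>I. g i x < 0}"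
    and uv: "0 \<le> u" "0 \<le> v" "u + v = 1"
  have "g i (u *\<^sub>R x + v *\<^sub>R y) < 0" if "i \<in> I" for i
  proof -
    have "g i (u *\<^sub>R x + v *\<^sub>R y) = u * g i x + v * g i y"
      using assms(2)[of i] uv(3) unfolding affine_map_def by (metis add_diff_cancel_right' real_scaleR_def)
    also have "\<dots> < 0"
      using x y that uv by (smt (verit) mem_Collect_eq mult_nonneg_nonpos mult_pos_neg)
    finally show ?thesis .
  qed
  then show "u *\<^sub>R x + v *\<^sub>R y \<in> {x \<in> T. \<forall>i\<in>I. g i x < 0}"
    using convexD[OF assms(1)] x y uv by blast
qed

lemma ex_small_step_strict_sublevels:
  fixes g :: "'i \<Rightarrow> 'x::real_vector \<Rightarrow> real"
  assumes "finite I" "\<And>i. affine_map (g i)" "\<And>i. i \<in> I \<Longrightarrow> g i x0 < 0"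
  obtains t where "0 < t" "t < 1" "\<forall>i\<in>I. g i ((1 - t) *\<^sub>R x0 + t *\<^sub>R x1) < 0"
proof -
  have "\<forall>\<^sub>F t in at_right 0. \<forall>i\<in>I. g i ((1 - t) *\<^sub>R x0 + t *\<^sub>R x1) < 0"
  proof (rule eventually_ball_finite[OF assms(1)], rule ballI)
    fix i assume "i \<in> I"
    have "((\<lambda>t. (1 - t) * g i x0 + t * g i x1) \<longlongrightarrow> (1 - 0) * g i x0 + 0 * g i x1) (at_right 0)"
      by (intro tendsto_intros)
    then have "\<forall>\<^sub>F t in at_right 0. (1 - t) * g i x0 + t * g i x1 < 0"
      using assms(3)[OF \<open>i \<in> I\<close>] by (simp add: order_tendstoD(2))
    then show "\<forall>\<^sub>F t in at_right 0. g i ((1 - t) *\<^sub>R x0 + t *\<^sub>R x1) < 0"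
      using assms(2)[of i] unfolding affine_map_def by simp
  qed
  then show ?thesis
    using that unfolding eventually_at_right_field by (metis field_lbound_gt_zero zero_less_one)
qed

lemma convex_adj_tangent2:
  assumes "convex E" shows "convex (adj_tangent2 E x v)"
proof (rule convexI)
  fix w1 w2 and u w :: real
  assume w1: "w1 \<in> adj_tangent2 E x v" and w2: "w2 \<in> adj_tangent2 E x v"
    and uw: "0 \<le> u" "0 \<le> w" "u + w = 1"
  show "u *\<^sub>R w1 + w *\<^sub>R w2 \<in> adj_tangent2 E x v"
    unfolding adj_tangent2_def
  proof (intro CollectI allI impI)
    fix h :: "nat \<Rightarrow> real" assume h: "(\<forall>n. 0 < h n) \<and> h \<longlonglongrightarrow> 0"
    have "w = 1 - u"
      using uw(3) by simp
    obtain a where a: "a \<longlonglongrightarrow> w1" "\<And>n. x + h n *\<^sub>R v + (h n)\<^sup>2 *\<^sub>R a n \<in> E"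
      using w1 h unfolding adj_tangent2_def by blast
    obtain b where b: "b \<longlonglongrightarrow> w2" "\<And>n. x + h n *\<^sub>R v + (h n)\<^sup>2 *\<^sub>R b n \<in> E"
      using w2 h unfolding adj_tangent2_def by blast
    have "x + h n *\<^sub>R v + (h n)\<^sup>2 *\<^sub>R (u *\<^sub>R a n + w *\<^sub>R b n) =
        u *\<^sub>R (x + h n *\<^sub>R v + (h n)\<^sup>2 *\<^sub>R a n) + w *\<^sub>R (x + h n *\<^sub>R v + (h n)\<^sup>2 *\<^sub>R b n)" for n
      unfolding \<open>w = 1 - u\<close> by (simp add: algebra_simps)
    then have "x + h n *\<^sub>R v + (h n)\<^sup>2 *\<^sub>R (u *\<^sub>R a n + w *\<^sub>R b n) \<in> E" for n
      using convexD[OF assms a(2) b(2) uw] by simp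
    moreover have "(\<lambda>n. u *\<^sub>R a n + w *\<^sub>R b n) \<longlonglongrightarrow> u *\<^sub>R w1 + w *\<^sub>R w2"
      by (intro tendsto_intros a b)
    ultimately show "\<exists>wn. wn \<longlonglongrightarrow> u *\<^sub>R w1 + w *\<^sub>R w2 \<and>
        (\<forall>n. x + h n *\<^sub>R v + (h n)\<^sup>2 *\<^sub>R wn n \<in> E)" by blast
  qed
qed

lemma convex_sets_meet_if_not_separated:
  fixes S T :: "'a::euclidean_space set"
  assumes "convex S" "convex T"
    and nosep: "\<nexists>a. a \<noteq> 0 \<and> (\<forall>x\<in>S. \<forall>y\<in>T. a \<bullet> x \<le> a \<bullet> y)"
  shows "S \<inter> T \<noteq> {}"
proof
  assume "S \<inter> T = {}"
  moreover obtain b :: 'a where "b \<noteq> 0"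
    using nonempty_Basis nonzero_Basis by blast
  ultimately have "S \<noteq> {}" "T \<noteq> {}" "S \<inter> T = {}"
    using nosep by auto
  then obtain a c where "a \<noteq> 0" "\<forall>x\<in>S. a \<bullet> x \<le> c" "\<forall>y\<in>T. c \<le> a \<bullet> y"
    using separating_hyperplane_sets[OF assms(1,2)] by blast
  then show False
    using nosep by (meson order_trans)
qed

lemma zero_in_interior_if_meets_open_halfspaces:
  fixes W :: "'a::euclidean_space set"
  assumes "convex W" and meets: "\<And>a. a \<noteq> 0 \<Longrightarrow> \<exists>w\<in>W. a \<bullet> w < 0"
  shows "0 \<in> interior W"
proof -
  have "0 \<in> W"
    using separating_hyperplane_set_0[OF assms(1)] meets by (meson not_le)
  have "interior W \<noteq> {}"
  proof
    assume "interior W = {}"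
    then obtain a c where "a \<noteq> 0" "W \<subseteq> {x. a \<bullet> x = c}"
      using empty_interior_subset_hyperplane[OF assms(1)] by metis
    moreover obtain w where "w \<in> W" "a \<bullet> w < 0"
      using meets[OF \<open>a \<noteq> 0\<close>] by blast
    ultimately have "a \<bullet> w = c" "a \<bullet> 0 = c" "a \<bullet> w < 0"
      using \<open>0 \<in> W\<close> by auto
    then show False by simp
  qed
  show ?thesis
  proof (rule ccontr)
    assume "0 \<notin> interior W"
    then have "0 \<notin> rel_interior W"
      using rel_interior_nonempty_interior[OF \<open>interior W \<noteq> {}\<close>] by simp
    then obtain a where "a \<noteq> 0" "\<And>w. w \<in> W \<Longrightarrow> a \<bullet> 0 \<le> a \<bullet> w"
      using supporting_hyperplane_rel_boundary[OF assms(1) \<open>0 \<in> W\<close>] by metis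
    with meets show False by (metis inner_zero_right not_le)
  qed
qed

lemma interior_affinity:
  fixes S :: "'a::euclidean_space set"
  assumes "c \<noteq> 0"
  shows "interior ((\<lambda>x. a + c *\<^sub>R x) ` S) = (\<lambda>x. a + c *\<^sub>R x) ` interior S"
proof -
  have affinity: "(\<lambda>x. a + c *\<^sub>R x) ` X = (+) a ` ((*\<^sub>R) c ` X)" for X
    by (simp add: image_image)
  have "inj ((*\<^sub>R) c :: 'a \<Rightarrow> 'a)"
    using assms by (metis injI scaleR_cancel_left)
  then show ?thesis
    unfolding affinity by (simp only: interior_translation interior_injective_linear_image linear_scale_self)
qed

lemma simplex_around_interior_zero:
  fixes W :: "'a::euclidean_space set"
  assumes "0 \<in> interior W"
  obtains p :: "nat \<Rightarrow> 'a"
  where "p ` {1..DIM('a) + 1} \<subseteq> W" "0 \<in> interior (convex hull (p ` {1..DIM('a) + 1}))"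
proof -
  obtain c :: 'a where c: "c \<in> interior (convex hull (insert 0 Basis))"
    by (rule interior_std_simplex_nonempty)
  obtain \<rho> where "\<rho> > 0" "cball 0 \<rho> \<subseteq> W"
    using assms mem_interior_cball by blast
  have "norm c + 1 > 0"
    by (simp add: add_nonneg_pos)
  define \<epsilon> where "\<epsilon> = \<rho> / (norm c + 1)"
  have "\<epsilon> > 0"
    unfolding \<epsilon>_def using \<open>\<rho> > 0\<close> \<open>norm c + 1 > 0\<close> by simp
  \<comment> \<open>the standard simplex, shrunk about its interior point \<open>c\<close> into \<open>cball 0 \<rho>\<close>\<close>
  define f where "f v = - (\<epsilon> *\<^sub>R c) + \<epsilon> *\<^sub>R v" for v :: 'a
  have "f v \<in> cball 0 \<rho>" if "v \<in> insert 0 Basis" for v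
  proof -
    have "norm (f v) = \<epsilon> * norm (v - c)"
      unfolding f_def using \<open>\<epsilon> > 0\<close> by (simp flip: scaleR_diff_right)
    also have "\<dots> \<le> \<epsilon> * (norm c + 1)"
      using that norm_triangle_ineq4[of v c] \<open>\<epsilon> > 0\<close> by (auto simp: norm_Basis)
    also have "\<dots> = \<rho>"
      unfolding \<epsilon>_def using \<open>norm c + 1 > 0\<close> by simp
    finally show ?thesis by simp
  qed
  then have sub: "f ` insert 0 Basis \<subseteq> W"
    using \<open>cball 0 \<rho> \<subseteq> W\<close> by blast
  have "interior (f ` X) = f ` interior X" for X
    unfolding f_def by (rule interior_affinity) (use \<open>\<epsilon> > 0\<close> in simp)
  moreover have "convex hull (f ` insert 0 Basis) = f ` (convex hull (insert 0 Basis))"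
    unfolding f_def by (rule convex_hull_affinity)
  ultimately have "interior (convex hull (f ` insert 0 Basis)) = f ` interior (convex hull (insert 0 Basis))"
    by simp
  moreover have "f c = 0"
    unfolding f_def by simp
  ultimately have int: "0 \<in> interior (convex hull (f ` insert 0 Basis))"
    using c by (metis image_eqI)
  have "card (insert (0::'a) Basis) = DIM('a) + 1"
    by (simp add: zero_not_in_Basis)
  then obtain e where "bij_betw e {1..DIM('a) + 1} (insert (0::'a) Basis)"
    using ex_bij_betw_nat_finite_1[of "insert (0::'a) Basis"] by auto
  then have "(f \<circ> e) ` {1..DIM('a) + 1} = f ` insert 0 Basis"
    by (metis bij_betw_imp_surj_on image_comp)
  with sub int show ?thesis
    using that[of "f \<circ> e"] by simp
qed

lemma simplex_of_images_around_zero: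
  fixes P :: "'x \<Rightarrow> 'a::euclidean_space"
  assumes "0 \<in> interior (P ` S)"
  obtains h where "\<forall>l\<in>{1..DIM('a) + 1}. h l \<in> S"
    and "0 \<in> interior (convex hull {P (h l) | l. l \<in> {1..DIM('a) + 1}})"
proof -
  obtain p where p: "p ` {1..DIM('a) + 1} \<subseteq> P ` S"
    and "0 \<in> interior (convex hull (p ` {1..DIM('a) + 1}))"
    using simplex_around_interior_zero[OF assms] by blast
  moreover have "{P (inv_into S P (p l)) | l. l \<in> {1..DIM('a) + 1}} = p ` {1..DIM('a) + 1}"
    unfolding Setcompr_eq_image using p by (intro image_cong refl) (meson f_inv_into_f image_subset_iff)
  ultimately show ?thesis
    using that[of "\<lambda>l. inv_into S P (p l)"] by (metis image_subset_iff inv_into_into)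
qed

lemma convex_open_orthant_minus_ray:
  fixes c :: "real^'n"
  shows "convex {z - lam *\<^sub>R c | z lam. (\<forall>i. z $ i < 0) \<and> lam > 0}"
proof -
  have "convex {z :: real^'n \<in> UNIV. \<forall>i\<in>UNIV. z $ i < 0}"
    by (rule convex_strict_sublevels_affine) (auto simp: affine_map_def)
  then have "convex ({z :: real^'n. \<forall>i. z $ i < 0} \<times> {0::real<..})"
    by (simp add: convex_Times)
  moreover have "linear (\<lambda>p. fst p - snd p *\<^sub>R c)"
    by (simp add: linear_iff algebra_simps)
  ultimately have "convex ((\<lambda>p. fst p - snd p *\<^sub>R c) ` ({z. \<forall>i. z $ i < 0} \<times> {0<..}))"
    by (rule convex_linear_image[rotated])
  moreover have "(\<lambda>p. fst p - snd p *\<^sub>R c) ` ({z. \<forall>i. z $ i < 0} \<times> {0<..})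
      = {z - lam *\<^sub>R c | z lam. (\<forall>i. z $ i < 0) \<and> lam > 0}"
    by force
  ultimately show ?thesis by simp
qed

lemma zero_in_interior_image_if_not_separated:
  fixes T :: "'x::real_vector set" and g :: "'i::finite \<Rightarrow> 'x \<Rightarrow> real"
    and P :: "'x \<Rightarrow> 'a::euclidean_space" and Z :: "(real^'i) set"
  assumes T: "convex T" and g: "\<And>i. affine_map (g i)" and P: "affine_map P"
    and Z: "convex Z" "\<And>z i. z \<in> Z \<Longrightarrow> i \<in> I \<Longrightarrow> z $ i < 0"
    and nosep: "\<nexists>L. L \<noteq> 0 \<and> (\<forall>x\<in>T. \<forall>z\<in>Z. L \<bullet> ((\<chi> i. if i \<in> I then g i x else 0), P x) \<le> L \<bullet> (z, 0))"
  shows "0 \<in> interior (P ` {x \<in> T. \<forall>i\<in>I. g i x < 0})"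
proof -
  define F where "F x = ((\<chi> i. if i \<in> I then g i x else 0), P x)" for x
  have "affine_map F"
    using g P unfolding affine_map_def F_def by (simp add: vec_eq_iff)
  have "F ` T \<inter> (\<lambda>z. (z, 0)) ` Z \<noteq> {}"
  proof (rule convex_sets_meet_if_not_separated)
    show "convex (F ` T)"
      using T \<open>affine_map F\<close> by (rule convex_image_affine_map)
    show "convex ((\<lambda>z. (z, 0::'a)) ` Z)"
      by (intro convex_linear_image Z(1)) (simp add: linear_iff)
  qed (use nosep in \<open>simp add: F_def\<close>)
  then obtain x0 z0 where "x0 \<in> T" "z0 \<in> Z" and F_x0: "F x0 = (z0, 0)"
    by blast
  then have x0: "P x0 = 0" "\<And>i. i \<in> I \<Longrightarrow> g i x0 < 0"
    using Z(2)[OF \<open>z0 \<in> Z\<close>] unfolding F_def by (auto simp: vec_eq_iff) metis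
  have meets: "\<exists>x\<in>T. b \<bullet> P x < 0" if "b \<noteq> 0" for b
  proof (rule ccontr)
    assume "\<not> (\<exists>x\<in>T. b \<bullet> P x < 0)"
    then have "\<forall>x\<in>T. \<forall>z\<in>Z. (0, -b) \<bullet> F x \<le> (0, -b) \<bullet> (z, 0::'a)"
      by (auto simp: F_def inner_prod_def not_less)
    moreover have "(0, -b) \<noteq> (0 :: (real^'i) \<times> 'a)"
      using that by (simp add: zero_prod_def)
    ultimately show False
      using nosep unfolding F_def by blast
  qed
  show ?thesis
  proof (rule zero_in_interior_if_meets_open_halfspaces)
    show "convex (P ` {x \<in> T. \<forall>i\<in>I. g i x < 0})"
      using convex_strict_sublevels_affine[OF T g] P by (rule convex_image_affine_map)
    fix b :: 'a assume "b \<noteq> 0"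
    then obtain x1 where "x1 \<in> T" "b \<bullet> P x1 < 0"
      using meets by blast
    obtain t where "0 < t" "t < 1" and t: "\<forall>i\<in>I. g i ((1 - t) *\<^sub>R x0 + t *\<^sub>R x1) < 0"
      by (rule ex_small_step_strict_sublevels[OF finite g x0(2)])
    have "(1 - t) *\<^sub>R x0 + t *\<^sub>R x1 \<in> {x \<in> T. \<forall>i\<in>I. g i x < 0}"
      using convexD[OF T \<open>x0 \<in> T\<close> \<open>x1 \<in> T\<close>] \<open>0 < t\<close> \<open>t < 1\<close> t by simp
    moreover have "b \<bullet> P ((1 - t) *\<^sub>R x0 + t *\<^sub>R x1) < 0"
      using P x0(1) \<open>0 < t\<close> \<open>b \<bullet> P x1 < 0\<close> unfolding affine_map_def by (simp add: mult_pos_neg)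
    ultimately show "\<exists>w\<in>P ` {x \<in> T. \<forall>i\<in>I. g i x < 0}. b \<bullet> w < 0"
      by blast
  qed
qed

lemma simplex_if_not_separated:
  fixes T :: "'x::real_vector set" and g :: "'i::finite \<Rightarrow> 'x \<Rightarrow> real"
    and P :: "'x \<Rightarrow> 'a::euclidean_space" and Z :: "(real^'i) set"
  assumes "convex T" "\<And>i. affine_map (g i)" "affine_map P"
    and "convex Z" "\<And>z i. z \<in> Z \<Longrightarrow> i \<in> I \<Longrightarrow> z $ i < 0"
    and "\<nexists>L. L \<noteq> 0 \<and> (\<forall>x\<in>T. \<forall>z\<in>Z. L \<bullet> ((\<chi> i. if i \<in> I then g i x else 0), P x) \<le> L \<bullet> (z, 0))"
  shows "affine hull (P ` T) = UNIV"
    and "\<exists>h. (\<forall>l\<in>{1..DIM('a) + 1}. h l \<in> T \<and> (\<forall>i\<in>I. g i (h l) < 0)) \<and>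
           (\<exists>\<delta>>0. cball 0 \<delta> \<subseteq> interior (convex hull {P (h l) | l. l \<in> {1..DIM('a) + 1}}))"
proof -
  have int: "0 \<in> interior (P ` {x \<in> T. \<forall>i\<in>I. g i x < 0})"
    using assms by (rule zero_in_interior_image_if_not_separated)
  then have "interior (P ` T) \<noteq> {}"
    using interior_mono[of "P ` {x \<in> T. \<forall>i\<in>I. g i x < 0}" "P ` T"] by blast
  then show "affine hull (P ` T) = UNIV"
    by (rule affine_hull_nonempty_interior)
  obtain h where h: "\<forall>l\<in>{1..DIM('a) + 1}. h l \<in> {x \<in> T. \<forall>i\<in>I. g i x < 0}"
    and "0 \<in> interior (convex hull {P (h l) | l. l \<in> {1..DIM('a) + 1}})"
    using simplex_of_images_around_zero[OF int] by blast
  \<comment> \<open>passing to the interior makes the ball below lie in the interior, not just in the hull\<close>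
  then have "0 \<in> interior (interior (convex hull {P (h l) | l. l \<in> {1..DIM('a) + 1}}))"
    by simp
  then show "\<exists>h. (\<forall>l\<in>{1..DIM('a) + 1}. h l \<in> T \<and> (\<forall>i\<in>I. g i (h l) < 0)) \<and>
           (\<exists>\<delta>>0. cball 0 \<delta> \<subseteq> interior (convex hull {P (h l) | l. l \<in> {1..DIM('a) + 1}}))"
    using h unfolding mem_interior_cball by blast
qed

lemma linear_vecPhi_components:
  assumes "linear (vecPhi f g)"
  shows "linear (f i)" "linear g" "linear (vecPhiI I f g)"
  using assms unfolding linear_iff vecPhi_def vecPhiI_def by (auto simp: vec_eq_iff)

lemma constraint_and_derivative_vanish_outside_I0':
  fixes \<phi> D\<phi> :: "'m \<Rightarrow> 'x \<Rightarrow> real" and \<psi> :: "'x \<Rightarrow> 'v::zero"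
  assumes "feasible_OP E i0 \<phi> \<psi> eb" "\<phi> i0 eb = 0"
    and "\<forall>i \<in> {i. i \<noteq> i0 \<and> \<phi> i eb = 0} \<union> {i0}. D\<phi> i y \<le> 0"
    and "i \<notin> {i. i \<noteq> i0 \<and> \<phi> i eb < 0} \<union> {i \<in> {i. i \<noteq> i0 \<and> \<phi> i eb = 0} \<union> {i0}. D\<phi> i y < 0}"
  shows "\<phi> i eb = 0" "D\<phi> i y = 0"
proof -
  have "\<phi> i eb \<le> 0"
    using assms(1,2) unfolding feasible_OP_def by (cases "i = i0") auto
  then show "\<phi> i eb = 0"
    using assms(2,4) by (cases "i = i0") auto
  then have "i \<in> {i. i \<noteq> i0 \<and> \<phi> i eb = 0} \<union> {i0}"
    by auto
  with assms(3,4) have "D\<phi> i y \<le> 0" "\<not> D\<phi> i y < 0"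
    by auto
  then show "D\<phi> i y = 0"
    by linarith
qed

theorem lemma4p1:
  fixes E :: "'x::banach set"
    and i0 :: "'m::finite"
    and \<phi> D\<phi> D2\<phi> :: "'m \<Rightarrow> 'x \<Rightarrow> real"
    and \<psi> D\<psi> D2\<psi> :: "'x \<Rightarrow> real^'k::finite"
    and eb y :: 'x
  assumes convE: "convex E"
    and minim: "minimizer_OP E i0 \<phi> \<psi> eb"
    and phi0: "\<phi> i0 eb = 0"
    and C5: "cond_C5 \<phi> \<psi> D\<phi> D\<psi> D2\<phi> D2\<psi> eb"
    and y_tan: "y \<in> adj_tangent E eb"
    and y_IA: "\<forall>i \<in> {i. i \<noteq> i0 \<and> \<phi> i eb = 0} \<union> {i0}. D\<phi> i y \<le> 0"
    and y_psi: "D\<psi> y = 0"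
    and T2_ne: "adj_tangent2 E eb y \<noteq> {}"
  shows
   "let IA = {i. i \<noteq> i0 \<and> \<phi> i eb = 0} \<union> {i0};
        IN = {i. i \<noteq> i0 \<and> \<phi> i eb < 0};
        I0' = IN \<union> {i \<in> IA. D\<phi> i y < 0};
        I0'' = UNIV - I0';
        T2 = adj_tangent2 E eb y;
        K = {vecPhiI I0'' D\<phi> D\<psi> x + (1/2) *\<^sub>R vecPhiI I0'' D2\<phi> D2\<psi> y | x. x \<in> T2};
        K\<psi> = {D\<psi> x + (1/2) *\<^sub>R D2\<psi> y | x. x \<in> T2};
        Y = (\<chi> i. if i \<in> IA then D\<phi> i y else 0) :: real^'m;
        Z = {z - lam *\<^sub>R ((\<chi> i. \<phi> i eb) + Y) | z lam. (\<forall>i. z $ i < 0) \<and> lam > 0};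
        A = affine hull K\<psi>;
        d = dim A
    in convex K \<and> convex K\<psi> \<and>
       ((\<nexists>L :: (real^'m) \<times> (real^'k). L \<noteq> 0 \<and>
            (\<forall>x \<in> T2. \<forall>z \<in> Z. L \<bullet> (vecPhiI I0'' D\<phi> D\<psi> x + (1/2) *\<^sub>R vecPhiI I0'' D2\<phi> D2\<psi> y)
                                 \<le> L \<bullet> (z, 0))) \<longrightarrow>
        (subspace A \<and> d > 0 \<and>
         (\<exists>h :: nat \<Rightarrow> 'x. (\<forall>l \<in> {1..d+1}. h l \<in> T2) \<and>
            (\<exists>\<delta>0 > 0. {v \<in> A. norm v \<le> \<delta>0}
                 \<subseteq> (top_of_set A) interior_of
                     (convex hull {D\<psi> (h l) + (1/2) *\<^sub>R D2\<psi> y | l. l \<in> {1..d+1}})) \<and>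
            (\<forall>l \<in> {1..d+1}. \<forall>i \<in> I0''. D\<phi> i (h l) + (1/2) * D2\<phi> i y < 0))))"
proof -
  define I where "I = UNIV - ({i. i \<noteq> i0 \<and> \<phi> i eb < 0} \<union> {i \<in> {i. i \<noteq> i0 \<and> \<phi> i eb = 0} \<union> {i0}. D\<phi> i y < 0})"
  define T where "T = adj_tangent2 E eb y"
  define c where "c = (\<chi> i. \<phi> i eb) + (\<chi> i. if i \<in> {i. i \<noteq> i0 \<and> \<phi> i eb = 0} \<union> {i0} then D\<phi> i y else 0)"
  define Z where "Z = {z - lam *\<^sub>R c | z lam. (\<forall>i. z $ i < 0) \<and> lam > 0}"
  define P where "P x = D\<psi> x + (1/2) *\<^sub>R D2\<psi> y" for x
  define g where "g i x = D\<phi> i x + (1/2) * D2\<phi> i y" for i x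
  have lin: "linear (vecPhi D\<phi> D\<psi>)"
    using C5 unfolding cond_C5_def by (blast dest: has_derivative_linear)
  have affine: "affine_map P" "affine_map (g i)"
    "affine_map (\<lambda>x. vecPhiI I D\<phi> D\<psi> x + (1/2) *\<^sub>R vecPhiI I D2\<phi> D2\<psi> y)" for i
    unfolding P_def g_def by (intro affine_map_linear_add_const linear_vecPhi_components[OF lin])+
  have "convex T"
    unfolding T_def using convE by (rule convex_adj_tangent2)
  have feasible: "feasible_OP E i0 \<phi> \<psi> eb"
    using minim unfolding minimizer_OP_def by blast
  have c_I: "c $ i = 0" if "i \<in> I" for i
  proof -
    have "\<phi> i eb = 0" "D\<phi> i y = 0"
      using constraint_and_derivative_vanish_outside_I0'[where D\<phi> = D\<phi> and y = y and i = i,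
          OF feasible phi0 y_IA] that
      unfolding I_def by simp_all
    then show ?thesis
      unfolding c_def by simp
  qed
  have Z_neg: "z $ i < 0" if "z \<in> Z" "i \<in> I" for z i
    using that c_I unfolding Z_def by auto
  have pair: "vecPhiI I D\<phi> D\<psi> x + (1/2) *\<^sub>R vecPhiI I D2\<phi> D2\<psi> y = ((\<chi> i. if i \<in> I then g i x else 0), P x)" for x
    by (simp add: vecPhiI_def g_def P_def vec_eq_iff)
  show ?thesis
    unfolding Let_def I_def[symmetric] T_def[symmetric] c_def[symmetric] Z_def[symmetric]
      P_def[symmetric] g_def[symmetric]
  proof (intro conjI impI)
    show "convex {vecPhiI I D\<phi> D\<psi> x + (1/2) *\<^sub>R vecPhiI I D2\<phi> D2\<psi> y | x. x \<in> T}"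
      "convex {P x | x. x \<in> T}"
      using \<open>convex T\<close> affine by (simp_all add: Setcompr_eq_image convex_image_affine_map)
  next
    assume "\<nexists>L. L \<noteq> 0 \<and> (\<forall>x\<in>T. \<forall>z\<in>Z. L \<bullet> (vecPhiI I D\<phi> D\<psi> x + (1/2) *\<^sub>R vecPhiI I D2\<phi> D2\<psi> y) \<le> L \<bullet> (z, 0))"
    then have "\<nexists>L. L \<noteq> 0 \<and> (\<forall>x\<in>T. \<forall>z\<in>Z. L \<bullet> ((\<chi> i. if i \<in> I then g i x else 0), P x) \<le> L \<bullet> (z, 0))"
      unfolding pair .
    note simplex = simplex_if_not_separated[OF \<open>convex T\<close> affine(2,1)
        convex_open_orthant_minus_ray[of c, folded Z_def] Z_neg this]
    let ?A = "affine hull {P x | x. x \<in> T}"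
    have aff_UNIV: "?A = UNIV"
      using simplex(1) by (simp add: Setcompr_eq_image)
    have ball: "{v \<in> UNIV. norm v \<le> r} = cball (0 :: real^'k) r" for r
      by auto
    show "subspace ?A" "0 < dim ?A"
      unfolding aff_UNIV by simp_all
    show "\<exists>h. (\<forall>l\<in>{1..dim ?A + 1}. h l \<in> T) \<and>
        (\<exists>\<delta>0>0. {v \<in> ?A. norm v \<le> \<delta>0} \<subseteq>
           top_of_set ?A interior_of (convex hull {P (h l) | l. l \<in> {1..dim ?A + 1}})) \<and>
        (\<forall>l\<in>{1..dim ?A + 1}. \<forall>i\<in>I. g i (h l) < 0)"
      unfolding aff_UNIV subtopology_UNIV euclidean_interior_of dim_UNIV ball
      using simplex(2) by blast
  qed
qed

end
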